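(* Every absolutely summable subset of an abelian Hausdorff topological group is absolutely Cauchy summable. Conversely, in a complete abelian Hausdorff topological group every absolutely Cauchy summable subset is absolutely summable.
   Context: A subset $A$ of a topological group $G$ is absolutely summable if for every family $\{z_a:a\in A\}$ of integers there is $g\in G$ such that for every neighbourhood $U$ of $0$ there is a finite $F\subseteq A$ with $g-\sum_{a\in E}z_aa\in U$ for every finite $E\subseteq A$ containing $F$. $A$ is absolutely Cauchy summable if for every neighbourhood $U$ of $0$ there is a finite $F\subseteq A$ such that the subgroup generated by $A\setminus F$ is contained in $U$. *)

theory Defs
  imports "HOL-Analysis.Analysis"
begin

definition zmult :: "int \<Rightarrow> 'a::ab_group_add \<Rightarrow> 'a" where
  "zmult k a = (if 0 \<le> k then (\<Sum>i<nat k. a) else - (\<Sum>i<nat (- k). a))"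

definition is_subgroup_add :: "'a::ab_group_add set \<Rightarrow> bool" where
  "is_subgroup_add H \<longleftrightarrow> 0 \<in> H \<and> (\<forall>x\<in>H. \<forall>y\<in>H. x + y \<in> H) \<and> (\<forall>x\<in>H. - x \<in> H)"

definition subgroup_generated :: "'a::ab_group_add set \<Rightarrow> 'a set" where
  "subgroup_generated X = \<Inter>{H. is_subgroup_add H \<and> X \<subseteq> H}"

definition absolutely_summable :: "'a::topological_ab_group_add set \<Rightarrow> bool" where
  "absolutely_summable A \<longleftrightarrow>
     (\<forall>z :: 'a \<Rightarrow> int. \<exists>g. \<forall>U. open U \<and> 0 \<in> U \<longrightarrow>
        (\<exists>F. finite F \<and> F \<subseteq> A \<and>
           (\<forall>E. finite E \<and> F \<subseteq> E \<and> E \<subseteq> A \<longrightarrow> g - (\<Sum>a\<in>E. zmult (z a) a) \<in> U)))"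

definition absolutely_Cauchy_summable :: "'a::topological_ab_group_add set \<Rightarrow> bool" where
  "absolutely_Cauchy_summable A \<longleftrightarrow>
     (\<forall>U. open U \<and> 0 \<in> U \<longrightarrow>
        (\<exists>F. finite F \<and> F \<subseteq> A \<and> subgroup_generated (A - F) \<subseteq> U))"

definition group_Cauchy_filter :: "'a::topological_ab_group_add filter \<Rightarrow> bool" where
  "group_Cauchy_filter F \<longleftrightarrow>
     (\<forall>U. open U \<and> 0 \<in> U \<longrightarrow> eventually (\<lambda>(x, y). x - y \<in> U) (F \<times>\<^sub>F F))"

definition group_complete :: "'a::topological_ab_group_add itself \<Rightarrow> bool" where
  "group_complete _ \<longleftrightarrow>
     (\<forall>F :: 'a filter. F \<noteq> bot \<and> group_Cauchy_filter F \<longrightarrow> (\<exists>g. F \<le> nhds g))"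

end

theory Submission
  imports Defs
begin

text \<open>
  A convergent
  net is Cauchy, so the partial sums over finite sets disjoint from some finite F stay in a given
  neighbourhood U of 0. If A were not absolutely Cauchy summable for U, every finite F would leave
  an integer combination of elements of A - F outside U; choosing these recursively yields
  pairwise disjoint blocks, and gluing their coefficients into one family z contradicts the
  Cauchy property on a block avoiding F.
  Conversely, the difference of the partial sums over two finite supersets of F lies in the
  subgroup generated by A - F, so absolute Cauchy summability makes every net of partial sums
  Cauchy, and completeness provides its limit.
\<close>

lemma zmult_0 [simp]: "zmult 0 a = 0"
  by (simp add: zmult_def)

lemma zmult_1 [simp]: "zmult 1 a = a"
  by (simp add: zmult_def)

lemma zmult_add_1: "zmult (k + 1) a = zmult k a + a"
proof (cases "k \<ge> 0")
  case True
  then show ?thesis by (simp add: zmult_def nat_add_distrib)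
next
  case False
  then have "nat (- k) = Suc (nat (- (k + 1)))" by simp
  then show ?thesis using False by (auto simp: zmult_def)
qed

lemma zmult_add: "zmult (m + n) a = zmult m a + zmult n a"
proof (induction n rule: int_induct[where k = 0])
  case (step1 n)
  then show ?case by (simp add: zmult_add_1 flip: add.assoc)
next
  case (step2 n)
  then show ?case
    using zmult_add_1[of "m + (n - 1)" a] zmult_add_1[of "n - 1" a] by (simp add: algebra_simps)
qed simp

lemma zmult_minus: "zmult (- k) a = - zmult k a"
  using zmult_add[of "- k" k a] by (simp add: eq_neg_iff_add_eq_0)

lemma
  assumes "is_subgroup_add H"
  shows is_subgroup_add_0: "0 \<in> H"
    and is_subgroup_add_add: "x \<in> H \<Longrightarrow> y \<in> H \<Longrightarrow> x + y \<in> H"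
    and is_subgroup_add_diff: "x \<in> H \<Longrightarrow> y \<in> H \<Longrightarrow> x - y \<in> H"
  using assms unfolding is_subgroup_add_def by (blast, blast, metis diff_conv_add_uminus)

lemma is_subgroup_add_zmult:
  assumes "is_subgroup_add H" "a \<in> H"
  shows "zmult k a \<in> H"
proof (induction k rule: int_induct[where k = 0])
  case (step1 k)
  then show ?case using assms by (simp add: zmult_add_1 is_subgroup_add_add)
next
  case (step2 k)
  have "zmult (k - 1) a = zmult k a - a"
    using zmult_add_1[of "k - 1" a] by simp
  then show ?case using step2 assms by (simp add: is_subgroup_add_diff)
qed (simp add: is_subgroup_add_0 assms)

lemma is_subgroup_add_sum:
  assumes "is_subgroup_add H" "\<And>x. x \<in> G \<Longrightarrow> f x \<in> H"
  shows "sum f G \<in> H"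
  using assms(2)
  by (induction G rule: infinite_finite_induct)
    (simp_all add: assms(1) is_subgroup_add_0 is_subgroup_add_add)

lemma is_subgroup_add_subgroup_generated: "is_subgroup_add (subgroup_generated X)"
  unfolding subgroup_generated_def is_subgroup_add_def by blast

lemma subgroup_generated_minimal: "is_subgroup_add H \<Longrightarrow> X \<subseteq> H \<Longrightarrow> subgroup_generated X \<subseteq> H"
  unfolding subgroup_generated_def by blast

lemma subset_subgroup_generated: "X \<subseteq> subgroup_generated X"
  unfolding subgroup_generated_def by blast

lemma sum_zmult_restrict:
  "finite K \<Longrightarrow> (\<Sum>a\<in>K. zmult (if a \<in> G then w a else 0) a) = (\<Sum>a\<in>K \<inter> G. zmult (w a) a)"
  by (simp add: sum.inter_restrict if_distrib[of "\<lambda>k. zmult k _"] cong: if_cong)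

lemma mem_subgroup_generated_iff:
  "x \<in> subgroup_generated X \<longleftrightarrow>
     (\<exists>G w. finite G \<and> G \<subseteq> X \<and> x = (\<Sum>a\<in>G. zmult (w a) a))"
proof -
  define C where "C = {x. \<exists>G w. finite G \<and> G \<subseteq> X \<and> x = (\<Sum>a\<in>G. zmult (w a) a)}"
  have add_closed: "x + y \<in> C" if x: "x \<in> C" and y: "y \<in> C" for x y
  proof -
    obtain G w where G: "finite G" "G \<subseteq> X" "x = (\<Sum>a\<in>G. zmult (w a) a)"
      using x unfolding C_def by blast
    obtain H v where H: "finite H" "H \<subseteq> X" "y = (\<Sum>a\<in>H. zmult (v a) a)"
      using y unfolding C_def by blast
    let ?u = "\<lambda>a. (if a \<in> G then w a else 0) + (if a \<in> H then v a else 0)"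
    have "x + y = (\<Sum>a\<in>G \<union> H. zmult (?u a) a)"
      using G H by (simp add: zmult_add sum.distrib sum_zmult_restrict Int_absorb1 Int_absorb2)
    then show ?thesis using G(1,2) H(1,2) unfolding C_def by auto
  qed
  have minus_closed: "- x \<in> C" if x: "x \<in> C" for x
  proof -
    obtain G w where G: "finite G" "G \<subseteq> X" "x = (\<Sum>a\<in>G. zmult (w a) a)"
      using x unfolding C_def by blast
    then have "- x = (\<Sum>a\<in>G. zmult (- w a) a)"
      by (simp add: zmult_minus sum_negf)
    then show ?thesis using G(1,2) unfolding C_def by auto
  qed
  have zero_in: "0 \<in> C"
    unfolding C_def by (intro CollectI exI[of _ "{}"]) auto
  have "a \<in> C" if "a \<in> X" for a
    unfolding C_def using that by (intro CollectI exI[of _ "{a}"] exI[of _ "\<lambda>_. 1"]) auto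
  moreover have "is_subgroup_add C"
    unfolding is_subgroup_add_def
    by (intro conjI ballI zero_in add_closed minus_closed) assumption+
  ultimately have "subgroup_generated X \<subseteq> C"
    by (intro subgroup_generated_minimal) auto
  moreover have "C \<subseteq> subgroup_generated X"
    unfolding C_def using is_subgroup_add_subgroup_generated subset_subgroup_generated
    by (auto intro!: is_subgroup_add_sum is_subgroup_add_zmult)
  ultimately show ?thesis unfolding C_def by blast
qed

lemma sum_zmult_diff_mem_subgroup_generated:
  assumes "finite E" "finite E'" "F \<subseteq> E" "F \<subseteq> E'" "E \<subseteq> A" "E' \<subseteq> A"
  shows "(\<Sum>a\<in>E. zmult (z a) a) - (\<Sum>a\<in>E'. zmult (z a) a) \<in> subgroup_generated (A - F)"
proof -
  have "(\<Sum>a\<in>E. zmult (z a) a) - (\<Sum>a\<in>E'. zmult (z a) a)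
      = (\<Sum>a\<in>E - E'. zmult (z a) a) - (\<Sum>a\<in>E' - E. zmult (z a) a)"
    using assms(1,2) by (simp add: sum.Int_Diff[of E _ E'] sum.Int_Diff[of E' _ E] Int_commute)
  moreover have "(\<Sum>a\<in>E - E'. zmult (z a) a) \<in> subgroup_generated (A - F)"
    unfolding mem_subgroup_generated_iff using assms by (intro exI[of _ "E - E'"] exI[of _ z]) auto
  moreover have "(\<Sum>a\<in>E' - E. zmult (z a) a) \<in> subgroup_generated (A - F)"
    unfolding mem_subgroup_generated_iff using assms by (intro exI[of _ "E' - E"] exI[of _ z]) auto
  ultimately show ?thesis
    by (simp add: is_subgroup_add_diff is_subgroup_add_subgroup_generated)
qed

lemma tendsto_iff_eventually_diff_mem:
  fixes f :: "'b \<Rightarrow> 'a::topological_group_add"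
  shows "(f \<longlongrightarrow> g) F \<longleftrightarrow> (\<forall>U. open U \<and> 0 \<in> U \<longrightarrow> eventually (\<lambda>x. g - f x \<in> U) F)"
proof -
  have "(f \<longlongrightarrow> g) F \<longleftrightarrow> ((\<lambda>x. g - f x) \<longlongrightarrow> 0) F"
  proof
    assume "(f \<longlongrightarrow> g) F"
    then show "((\<lambda>x. g - f x) \<longlongrightarrow> 0) F"
      using tendsto_diff[OF tendsto_const, of f g F g] by simp
  next
    assume "((\<lambda>x. g - f x) \<longlongrightarrow> 0) F"
    from tendsto_add[OF tendsto_minus[OF this] tendsto_const[of g]] show "(f \<longlongrightarrow> g) F"
      by simp
  qed
  then show ?thesis
    by (auto simp: tendsto_def)
qed

lemma absolutely_summable_iff_summable_on:
  "absolutely_summable A \<longleftrightarrow> (\<forall>z. (\<lambda>a. zmult (z a) a) summable_on A)"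
  unfolding absolutely_summable_def summable_on_def has_sum_def tendsto_iff_eventually_diff_mem
    eventually_finite_subsets_at_top ..

lemma le_nhds_imp_group_Cauchy_filter:
  fixes F :: "'a::topological_ab_group_add filter"
  assumes "F \<le> nhds g"
  shows "group_Cauchy_filter F"
proof -
  have "((\<lambda>p. fst p) \<longlongrightarrow> g) (nhds (g, g))" "((\<lambda>p. snd p) \<longlongrightarrow> g) (nhds (g, g))"
    using tendsto_fst[OF filterlim_ident] tendsto_snd[OF filterlim_ident] by fastforce+
  then have "((\<lambda>p. fst p - snd p) \<longlongrightarrow> g - g) (nhds (g, g))"
    by (rule tendsto_diff)
  then have "((\<lambda>p. fst p - snd p) \<longlongrightarrow> 0) (F \<times>\<^sub>F F)"
    using assms by (auto simp: nhds_prod intro: tendsto_mono prod_filter_mono)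
  then show ?thesis
    unfolding group_Cauchy_filter_def tendsto_def by (simp add: case_prod_unfold)
qed

lemma group_Cauchy_filter_finite_subsets_iff:
  fixes f :: "'b set \<Rightarrow> 'a::topological_ab_group_add"
  shows "group_Cauchy_filter (filtermap f (finite_subsets_at_top A)) \<longleftrightarrow>
    (\<forall>U. open U \<and> 0 \<in> U \<longrightarrow> (\<exists>F. finite F \<and> F \<subseteq> A \<and>
       (\<forall>E E'. finite E \<and> F \<subseteq> E \<and> E \<subseteq> A \<and> finite E' \<and> F \<subseteq> E' \<and> E' \<subseteq> A \<longrightarrow>
          f E - f E' \<in> U)))"
proof -
  have "eventually (\<lambda>p. f (fst p) - f (snd p) \<in> U)
          (finite_subsets_at_top A \<times>\<^sub>F finite_subsets_at_top A) \<longleftrightarrow>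
        (\<exists>F. finite F \<and> F \<subseteq> A \<and>
          (\<forall>E E'. finite E \<and> F \<subseteq> E \<and> E \<subseteq> A \<and> finite E' \<and> F \<subseteq> E' \<and> E' \<subseteq> A \<longrightarrow>
             f E - f E' \<in> U))" for U
  proof
    assume "eventually (\<lambda>p. f (fst p) - f (snd p) \<in> U)
              (finite_subsets_at_top A \<times>\<^sub>F finite_subsets_at_top A)"
    then obtain Q where Q: "eventually Q (finite_subsets_at_top A)"
      and Q_diff: "\<And>E E'. Q E \<Longrightarrow> Q E' \<Longrightarrow> f E - f E' \<in> U"
      unfolding eventually_prod_same by auto
    then obtain F where "finite F" "F \<subseteq> A" "\<And>E. finite E \<Longrightarrow> F \<subseteq> E \<Longrightarrow> E \<subseteq> A \<Longrightarrow> Q E"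
      unfolding eventually_finite_subsets_at_top by auto
    with Q_diff show "\<exists>F. finite F \<and> F \<subseteq> A \<and>
          (\<forall>E E'. finite E \<and> F \<subseteq> E \<and> E \<subseteq> A \<and> finite E' \<and> F \<subseteq> E' \<and> E' \<subseteq> A \<longrightarrow>
             f E - f E' \<in> U)"
      by meson
  next
    assume "\<exists>F. finite F \<and> F \<subseteq> A \<and>
          (\<forall>E E'. finite E \<and> F \<subseteq> E \<and> E \<subseteq> A \<and> finite E' \<and> F \<subseteq> E' \<and> E' \<subseteq> A \<longrightarrow>
             f E - f E' \<in> U)"
    then obtain F where F: "finite F" "F \<subseteq> A"
      and F_diff: "\<And>E E'. finite E \<Longrightarrow> F \<subseteq> E \<Longrightarrow> E \<subseteq> A \<Longrightarrow> finite E' \<Longrightarrow> F \<subseteq> E' \<Longrightarrow> E' \<subseteq> A \<Longrightarrow>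
             f E - f E' \<in> U"
      by meson
    have "eventually (\<lambda>E. finite E \<and> F \<subseteq> E \<and> E \<subseteq> A) (finite_subsets_at_top A)"
      unfolding eventually_finite_subsets_at_top using F by blast
    then show "eventually (\<lambda>p. f (fst p) - f (snd p) \<in> U)
        (finite_subsets_at_top A \<times>\<^sub>F finite_subsets_at_top A)"
      unfolding eventually_prod_same using F_diff by force
  qed
  then show ?thesis
    unfolding group_Cauchy_filter_def prod_filtermap1 prod_filtermap2 eventually_filtermap
    by (simp add: case_prod_unfold)
qed

lemma summable_on_small_tails:
  fixes f :: "'b \<Rightarrow> 'a::topological_ab_group_add"
  assumes "f summable_on A" "open U" "0 \<in> U"
  obtains F where "finite F" "F \<subseteq> A" "\<And>B. finite B \<Longrightarrow> B \<subseteq> A - F \<Longrightarrow> sum f B \<in> U"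
proof -
  obtain g where "(sum f \<longlongrightarrow> g) (finite_subsets_at_top A)"
    using assms(1) unfolding summable_on_def has_sum_def by blast
  then have "group_Cauchy_filter (filtermap (sum f) (finite_subsets_at_top A))"
    by (intro le_nhds_imp_group_Cauchy_filter) (simp add: filterlim_def)
  then obtain F where F: "finite F" "F \<subseteq> A"
    and F_diff: "\<And>E E'. finite E \<Longrightarrow> F \<subseteq> E \<Longrightarrow> E \<subseteq> A \<Longrightarrow> finite E' \<Longrightarrow> F \<subseteq> E' \<Longrightarrow> E' \<subseteq> A \<Longrightarrow>
        sum f E - sum f E' \<in> U"
    using assms(2,3) unfolding group_Cauchy_filter_finite_subsets_iff by meson
  show ?thesis
  proof (rule that[OF F])
    fix B assume B: "finite B" "B \<subseteq> A - F"
    then have "sum f B = sum f (F \<union> B) - sum f F"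
      using F(1) by (subst sum.union_disjoint) auto
    then show "sum f B \<in> U"
      using F B F_diff[of "F \<union> B" F] by auto
  qed
qed

lemma disjoint_family_The_index:
  assumes "disjoint_family B" "a \<in> B n"
  shows "(THE k. a \<in> B k) = n"
  using assms by (intro the_equality) (auto simp: disjoint_family_on_def)

lemma disjoint_family_ex_disjoint:
  fixes B :: "'i \<Rightarrow> 'a set"
  assumes "infinite (UNIV :: 'i set)" "disjoint_family B" "finite F"
  obtains n where "F \<inter> B n = {}"
proof -
  obtain n where "n \<notin> (\<lambda>a. THE k. a \<in> B k) ` F"
    using ex_new_if_finite[OF assms(1)] assms(3) by blast
  then have "F \<inter> B n = {}"
    using disjoint_family_The_index[OF assms(2)] by force
  then show ?thesis
    by (rule that)
qed

lemma obtain_disjoint_family_avoiding_finite_sets: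
  assumes "\<And>F. finite F \<Longrightarrow> F \<subseteq> A \<Longrightarrow> \<exists>G x. finite G \<and> G \<subseteq> A - F \<and> P G x"
  obtains B :: "nat \<Rightarrow> 'a set" and w
  where "\<And>n. finite (B n)" "\<And>n. B n \<subseteq> A" "\<And>n. P (B n) (w n)" "disjoint_family B"
proof -
  obtain G x where Gx: "\<And>F. finite F \<Longrightarrow> F \<subseteq> A \<Longrightarrow> finite (G F) \<and> G F \<subseteq> A - F \<and> P (G F) (x F)"
    using assms by metis
  define T where "T = rec_nat {} (\<lambda>_ S. S \<union> G S)"
  have T_0: "T 0 = {}" and T_Suc: "T (Suc n) = T n \<union> G (T n)" for n
    by (simp_all add: T_def)
  have T: "finite (T n) \<and> T n \<subseteq> A" for n
    by (induction n) (use Gx in \<open>auto simp: T_0 T_Suc\<close>)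
  have "G (T m) \<inter> G (T n) = {}" if "m < n" for m n
  proof -
    have "G (T m) \<subseteq> T (Suc m)"
      by (simp add: T_Suc)
    also have "\<dots> \<subseteq> T n"
      using lift_Suc_mono_le[of T, OF _ Suc_leI[OF that]] by (auto simp: T_Suc)
    finally show ?thesis
      using Gx T[of n] by blast
  qed
  then have "disjoint_family (\<lambda>n. G (T n))"
    unfolding disjoint_family_on_def by (metis Int_commute linorder_neqE_nat)
  then show ?thesis
    using Gx T by (intro that[of "\<lambda>n. G (T n)" "\<lambda>n. x (T n)"]) auto
qed

lemma absolutely_summable_imp_absolutely_Cauchy_summable:
  fixes A :: "'a::topological_ab_group_add set"
  assumes "absolutely_summable A"
  shows "absolutely_Cauchy_summable A"
  unfolding absolutely_Cauchy_summable_def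
proof (intro allI impI)
  fix U :: "'a set"
  assume "open U \<and> 0 \<in> U"
  then have U: "open U" "0 \<in> U"
    by auto
  show "\<exists>F. finite F \<and> F \<subseteq> A \<and> subgroup_generated (A - F) \<subseteq> U"
  proof (rule ccontr)
    assume no_F: "\<nexists>F. finite F \<and> F \<subseteq> A \<and> subgroup_generated (A - F) \<subseteq> U"
    have "\<exists>G w. finite G \<and> G \<subseteq> A - F \<and> (\<Sum>a\<in>G. zmult (w a) a) \<notin> U"
      if F: "finite F" "F \<subseteq> A" for F
    proof -
      obtain x where x: "x \<in> subgroup_generated (A - F)" "x \<notin> U"
        using no_F F by blast
      then obtain G w where "finite G" "G \<subseteq> A - F" "x = (\<Sum>a\<in>G. zmult (w a) a)"
        unfolding mem_subgroup_generated_iff by blast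
      with x(2) show ?thesis
        by blast
    qed
    then obtain B :: "nat \<Rightarrow> 'a set" and w where B: "\<And>n. finite (B n)" "\<And>n. B n \<subseteq> A"
      and B_notin: "\<And>n. (\<Sum>a\<in>B n. zmult (w n a) a) \<notin> U" and disj: "disjoint_family B"
      by (rule obtain_disjoint_family_avoiding_finite_sets
          [where P = "\<lambda>G w. (\<Sum>a\<in>G. zmult (w a) a) \<notin> U"]) blast+
    define z where "z a = w (THE n. a \<in> B n) a" for a
    have summable: "(\<lambda>a. zmult (z a) a) summable_on A"
      using assms unfolding absolutely_summable_iff_summable_on ..
    obtain F where F: "finite F" "F \<subseteq> A"
      and small: "\<And>G. finite G \<Longrightarrow> G \<subseteq> A - F \<Longrightarrow> (\<Sum>a\<in>G. zmult (z a) a) \<in> U"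
      using summable_on_small_tails[OF summable U] by blast
    obtain n where "F \<inter> B n = {}"
      using disjoint_family_ex_disjoint[OF infinite_UNIV_nat disj F(1)] by blast
    then have "(\<Sum>a\<in>B n. zmult (z a) a) \<in> U"
      using small[of "B n"] B by blast
    moreover have "(\<Sum>a\<in>B n. zmult (z a) a) = (\<Sum>a\<in>B n. zmult (w n a) a)"
      by (rule sum.cong) (simp_all add: z_def disjoint_family_The_index[OF disj])
    ultimately show False
      using B_notin by simp
  qed
qed

lemma absolutely_Cauchy_summable_imp_absolutely_summable:
  fixes A :: "'a::topological_ab_group_add set"
  assumes "group_complete TYPE('a)" "absolutely_Cauchy_summable A"
  shows "absolutely_summable A"
  unfolding absolutely_summable_iff_summable_on summable_on_def has_sum_def filterlim_def
proof
  fix z :: "'a \<Rightarrow> int"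
  have "group_Cauchy_filter (filtermap (\<lambda>E. \<Sum>a\<in>E. zmult (z a) a) (finite_subsets_at_top A))"
    unfolding group_Cauchy_filter_finite_subsets_iff
  proof (intro allI impI)
    fix U :: "'a set"
    assume "open U \<and> 0 \<in> U"
    then obtain F where F: "finite F" "F \<subseteq> A" "subgroup_generated (A - F) \<subseteq> U"
      using assms(2) unfolding absolutely_Cauchy_summable_def by blast
    have diff_in_U: "(\<Sum>a\<in>E. zmult (z a) a) - (\<Sum>a\<in>E'. zmult (z a) a) \<in> U"
      if "finite E" "F \<subseteq> E" "E \<subseteq> A" "finite E'" "F \<subseteq> E'" "E' \<subseteq> A" for E E'
      using sum_zmult_diff_mem_subgroup_generated[of E E' F A z] that F(3) by auto
    show "\<exists>F. finite F \<and> F \<subseteq> A \<and>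
      (\<forall>E E'. finite E \<and> F \<subseteq> E \<and> E \<subseteq> A \<and> finite E' \<and> F \<subseteq> E' \<and> E' \<subseteq> A \<longrightarrow>
        (\<Sum>a\<in>E. zmult (z a) a) - (\<Sum>a\<in>E'. zmult (z a) a) \<in> U)"
      using F(1,2) diff_in_U by (intro exI[of _ F]) auto
  qed
  then show "\<exists>g. filtermap (\<lambda>E. \<Sum>a\<in>E. zmult (z a) a) (finite_subsets_at_top A) \<le> nhds g"
    using assms(1) unfolding group_complete_def by (simp add: filtermap_bot_iff)
qed

theorem proposition6p5:
  shows "(\<forall>A :: 'a::{topological_ab_group_add, t2_space} set.
           absolutely_summable A \<longrightarrow> absolutely_Cauchy_summable A)
       \<and> (group_complete TYPE('a) \<longrightarrow>
           (\<forall>A :: 'a set. absolutely_Cauchy_summable A \<longrightarrow> absolutely_summable A))"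
  using absolutely_summable_imp_absolutely_Cauchy_summable
    absolutely_Cauchy_summable_imp_absolutely_summable
  by blast

end
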